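(* Let $\alpha$ be an increasing sequence in $\{1,\dots,m\}$. If $a,b\in\mathcal{S}_\alpha$, then the product stream $a\cdot b$ lies in $\mathcal{S}_\alpha$ (in particular it is finite, monotonic and reduced at every level of nesting).
   Context: Fix a semiring $R$, an integer $m\ge1$, and finite nonempty totally ordered sets $I_1,\dots,I_m$; $i::\alpha$ denotes the sequence with head $i$ and tail $\alpha$. An indexed stream of type $I\to V$ is a tuple $(S,q,\iota,\nu,\mathrm{ready},\delta)$: state space $S$, current state $q\in S$, $\iota:S\to I$, $\nu:S\to V$, $\mathrm{ready}:S\to\{\bot,\top\}$, $\delta:S\to S$; "the stream $r$" is the same tuple with current state $r$. $r$ is reachable from $q$ if $r=\delta^k(q)$, $k\ge0$; terminal if $\delta(r)=r$. $q$ is simple if: (Finite) some state reachable from $q$ is terminal and every reachable terminal $t$ has $\mathrm{ready}(t)=\bot$; (Monotonic) $\iota(r)\le\iota(\delta(r))$ for all $r$ reachable from $q$; (Reduced) if $r$ is reachable from $q$, $s$ reachable from $r$, $\mathrm{ready}(r)=\mathrm{ready}(s)=\top$ and $\iota(r)=\iota(s)$, then $r=s$. Nested streams: $\mathcal{S}_{[]}=R$; $\mathcal{S}_{i::\alpha}$ is the collection of simple streams of type $I_i\to\mathcal{S}_\alpha$. Ordering on stream states $a,b$ of the same index type: $a\le b$ iff $\iota(a)<\iota(b)$ or ($\iota(a)=\iota(b)$ and $\mathrm{ready}(a)=\bot$). Product stream: given streams $a,b$ of type $I\to V$ and a multiplication $\cdot:V\times V\to V$, $a\cdot b$ has state space $S_a\times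 S_b$, current state $(a,b)$, and $\iota(a,b)=\max(\iota(a),\iota(b))$, $\nu(a,b)=\nu(a)\cdot\nu(b)$, $\mathrm{ready}(a,b)=\mathrm{ready}(a)\wedge\mathrm{ready}(b)\wedge(\iota(a)=\iota(b))$, and $\delta(a,b)=(\delta(a),b)$ if $a\le b$, otherwise $(a,\delta(b))$. Multiplication on $\mathcal{S}_\alpha$ is defined recursively: on $\mathcal{S}_{[]}=R$ it is the semiring product; on $\mathcal{S}_{i::\alpha}$ it is the product stream using the multiplication of $\mathcal{S}_\alpha$ on values. *)

theory Defs
  imports Main
begin

text \<open>Universal state type: any state space embeds via Atom; product states are Pair.\<close>
datatype 'a st = Atom 'a | Pair "'a st" "'a st"

text \<open>Nested stream values.  Strm S q iota nu ready delta is an indexed stream with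
  state space (carrier) S, current state q.\<close>
datatype ('a, 'i, 'r) nv =
    Scal 'r
  | Strm "'a st set" "'a st" "'a st \<Rightarrow> 'i" "'a st \<Rightarrow> ('a, 'i, 'r) nv"
         "'a st \<Rightarrow> bool" "'a st \<Rightarrow> 'a st"

definition reach :: "('s \<Rightarrow> 's) \<Rightarrow> 's \<Rightarrow> 's \<Rightarrow> bool" where
  "reach \<delta> q r \<longleftrightarrow> (\<exists>k. r = (\<delta> ^^ k) q)"

definition terminal :: "('s \<Rightarrow> 's) \<Rightarrow> 's \<Rightarrow> bool" where
  "terminal \<delta> r \<longleftrightarrow> \<delta> r = r"

definition finite_str :: "('s \<Rightarrow> 's) \<Rightarrow> ('s \<Rightarrow> bool) \<Rightarrow> 's \<Rightarrow> bool" where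
  "finite_str \<delta> rdy q \<longleftrightarrow>
     (\<exists>t. reach \<delta> q t \<and> terminal \<delta> t) \<and>
     (\<forall>t. reach \<delta> q t \<and> terminal \<delta> t \<longrightarrow> \<not> rdy t)"

definition monotonic_str :: "('s \<Rightarrow> 's) \<Rightarrow> ('s \<Rightarrow> 'i::linorder) \<Rightarrow> 's \<Rightarrow> bool" where
  "monotonic_str \<delta> \<iota> q \<longleftrightarrow> (\<forall>r. reach \<delta> q r \<longrightarrow> \<iota> r \<le> \<iota> (\<delta> r))"

definition reduced_str :: "('s \<Rightarrow> 's) \<Rightarrow> ('s \<Rightarrow> 'i) \<Rightarrow> ('s \<Rightarrow> bool) \<Rightarrow> 's \<Rightarrow> bool" where
  "reduced_str \<delta> \<iota> rdy q \<longleftrightarrow>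
     (\<forall>r s. reach \<delta> q r \<and> reach \<delta> r s \<and> rdy r \<and> rdy s \<and> \<iota> r = \<iota> s \<longrightarrow> r = s)"

definition simple_str :: "('s \<Rightarrow> 's) \<Rightarrow> ('s \<Rightarrow> 'i::linorder) \<Rightarrow> ('s \<Rightarrow> bool) \<Rightarrow> 's \<Rightarrow> bool" where
  "simple_str \<delta> \<iota> rdy q \<longleftrightarrow>
     finite_str \<delta> rdy q \<and> monotonic_str \<delta> \<iota> q \<and> reduced_str \<delta> \<iota> rdy q"

primrec inS :: "(nat \<Rightarrow> 'i::linorder set) \<Rightarrow> nat list \<Rightarrow> ('a, 'i, 'r) nv \<Rightarrow> bool" where
  "inS I [] v = (case v of Scal _ \<Rightarrow> True | Strm _ _ _ _ _ _ \<Rightarrow> False)"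
| "inS I (i # \<alpha>) v = (case v of Scal _ \<Rightarrow> False
     | Strm S q \<iota> \<nu> rdy \<delta> \<Rightarrow>
         q \<in> S \<and> (\<forall>s\<in>S. \<delta> s \<in> S \<and> \<iota> s \<in> I i \<and> inS I \<alpha> (\<nu> s))
         \<and> simple_str \<delta> \<iota> rdy q)"

definition st_le :: "('s \<Rightarrow> 'i::linorder) \<Rightarrow> ('s \<Rightarrow> bool) \<Rightarrow> 's \<Rightarrow>
                     ('t \<Rightarrow> 'i) \<Rightarrow> ('t \<Rightarrow> bool) \<Rightarrow> 't \<Rightarrow> bool" where
  "st_le \<iota>a ra a \<iota>b rb b \<longleftrightarrow> \<iota>a a < \<iota>b b \<or> (\<iota>a a = \<iota>b b \<and> \<not> ra a)"

definition prod_str ::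
  "(('a, 'i::linorder, 'r) nv \<Rightarrow> ('a, 'i, 'r) nv \<Rightarrow> ('a, 'i, 'r) nv)
   \<Rightarrow> ('a, 'i, 'r) nv \<Rightarrow> ('a, 'i, 'r) nv \<Rightarrow> ('a, 'i, 'r) nv" where
  "prod_str mul a b = (case (a, b) of
     (Strm Sa qa \<iota>a \<nu>a ra \<delta>a, Strm Sb qb \<iota>b \<nu>b rb \<delta>b) \<Rightarrow>
       Strm {Pair x y | x y. x \<in> Sa \<and> y \<in> Sb} (Pair qa qb)
         (\<lambda>s. case s of Pair x y \<Rightarrow> max (\<iota>a x) (\<iota>b y) | Atom _ \<Rightarrow> undefined)
         (\<lambda>s. case s of Pair x y \<Rightarrow> mul (\<nu>a x) (\<nu>b y) | Atom _ \<Rightarrow> undefined)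
         (\<lambda>s. case s of Pair x y \<Rightarrow> ra x \<and> rb y \<and> \<iota>a x = \<iota>b y | Atom _ \<Rightarrow> undefined)
         (\<lambda>s. case s of Pair x y \<Rightarrow>
                 (if st_le \<iota>a ra x \<iota>b rb y then Pair (\<delta>a x) y else Pair x (\<delta>b y))
               | Atom _ \<Rightarrow> undefined)
   | _ \<Rightarrow> undefined)"

primrec mulS :: "nat list \<Rightarrow> ('a, 'i::linorder, 'r::semiring_1) nv \<Rightarrow> ('a, 'i, 'r) nv \<Rightarrow> ('a, 'i, 'r) nv" where
  "mulS [] a b = (case (a, b) of (Scal x, Scal y) \<Rightarrow> Scal (x * y) | _ \<Rightarrow> undefined)"
| "mulS (i # \<alpha>) a b = prod_str (mulS \<alpha>) a b"

end

theory Submission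
  imports Defs
begin

text \<open>The product state advances whichever factor is behind, so every state reachable from
  Pair qa qb is a pair of states reachable from qa and from qb.  Monotonicity and reducedness
  of the factors then pass to the product componentwise.  For finiteness, every non-terminal
  step advances a factor that is not yet terminal, so the sum of the distances of the two
  factors to their terminal states decreases; and a product state is terminal only if the
  factor it would advance is terminal, hence not ready.\<close>

lemma terminal_funpow_step:
  assumes "terminal f ((f ^^ n) x)" and "f x \<noteq> x"
  obtains n' where "n = Suc n'" and "terminal f ((f ^^ n') (f x))"
proof (cases n)
  case 0
  with assms show ?thesis by (simp add: terminal_def)
next
  case (Suc n')
  with assms(1) have "terminal f ((f ^^ n') (f x))"
    by (simp add: funpow_Suc_right del: funpow.simps)
  with Suc show ?thesis by (rule that)
qed

locale merge_product =
  fixes \<delta>a :: "'s st \<Rightarrow> 's st" and \<iota>a :: "'s st \<Rightarrow> 'i::linorder" and ra :: "'s st \<Rightarrow> bool"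
    and \<delta>b :: "'s st \<Rightarrow> 's st" and \<iota>b :: "'s st \<Rightarrow> 'i" and rb :: "'s st \<Rightarrow> bool"
    and \<delta> :: "'s st \<Rightarrow> 's st" and \<iota> :: "'s st \<Rightarrow> 'i" and rdy :: "'s st \<Rightarrow> bool"
  assumes next_Pair:
      "\<delta> (Pair x y) = (if st_le \<iota>a ra x \<iota>b rb y then Pair (\<delta>a x) y else Pair x (\<delta>b y))"
    and index_Pair: "\<iota> (Pair x y) = max (\<iota>a x) (\<iota>b y)"
    and ready_Pair: "rdy (Pair x y) \<longleftrightarrow> ra x \<and> rb y \<and> \<iota>a x = \<iota>b y"
begin

lemma funpow_Pair: "\<exists>j l. (\<delta> ^^ k) (Pair x y) = Pair ((\<delta>a ^^ j) x) ((\<delta>b ^^ l) y)"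
proof (induction k)
  case 0
  show ?case by (metis funpow_0)
next
  case (Suc k)
  then obtain j l where "(\<delta> ^^ k) (Pair x y) = Pair ((\<delta>a ^^ j) x) ((\<delta>b ^^ l) y)" by blast
  then have "(\<delta> ^^ Suc k) (Pair x y) = Pair ((\<delta>a ^^ Suc j) x) ((\<delta>b ^^ l) y) \<or>
             (\<delta> ^^ Suc k) (Pair x y) = Pair ((\<delta>a ^^ j) x) ((\<delta>b ^^ Suc l) y)"
    by (simp add: next_Pair)
  then show ?case by blast
qed

lemma reach_PairE:
  assumes "reach \<delta> (Pair x y) r"
  obtains x' y' where "r = Pair x' y'" and "reach \<delta>a x x'" and "reach \<delta>b y y'"
  using assms funpow_Pair unfolding reach_def by metis

lemma terminal_PairD:
  assumes "terminal \<delta> (Pair x y)"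
  shows "if st_le \<iota>a ra x \<iota>b rb y then terminal \<delta>a x else terminal \<delta>b y"
  using assms by (simp add: terminal_def next_Pair split: if_splits)

lemma reaches_terminal_Pair:
  assumes "terminal \<delta>a ((\<delta>a ^^ na) x)" and "terminal \<delta>b ((\<delta>b ^^ nb) y)"
  shows "\<exists>k. terminal \<delta> ((\<delta> ^^ k) (Pair x y))"
  using assms
proof (induction "na + nb" arbitrary: na nb x y rule: less_induct)
  case less
  show ?case
  proof (cases "terminal \<delta> (Pair x y)")
    case True
    then show ?thesis by (metis funpow_0)
  next
    case False
    have "\<exists>k. terminal \<delta> ((\<delta> ^^ k) (\<delta> (Pair x y)))"
    proof (cases "st_le \<iota>a ra x \<iota>b rb y")
      case True
      with False have "\<delta>a x \<noteq> x" by (simp add: terminal_def next_Pair)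
      with less.prems(1) obtain na' where "na = Suc na'" "terminal \<delta>a ((\<delta>a ^^ na') (\<delta>a x))"
        by (rule terminal_funpow_step)
      then show ?thesis
        using less.hyps[of na' nb "\<delta>a x" y] less.prems(2) True by (simp add: next_Pair)
    next
      case le: False
      with False have "\<delta>b y \<noteq> y" by (simp add: terminal_def next_Pair)
      with less.prems(2) obtain nb' where "nb = Suc nb'" "terminal \<delta>b ((\<delta>b ^^ nb') (\<delta>b y))"
        by (rule terminal_funpow_step)
      then show ?thesis
        using less.hyps[of na nb' x "\<delta>b y"] less.prems(1) le by (simp add: next_Pair)
    qed
    then show ?thesis by (metis funpow_Suc_right comp_apply)
  qed
qed

lemma finite_str_Pair:
  assumes "finite_str \<delta>a ra qa" and "finite_str \<delta>b rb qb"
  shows "finite_str \<delta> rdy (Pair qa qb)"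
  unfolding finite_str_def
proof (intro conjI allI impI)
  obtain na nb where "terminal \<delta>a ((\<delta>a ^^ na) qa)" and "terminal \<delta>b ((\<delta>b ^^ nb) qb)"
    using assms unfolding finite_str_def reach_def by blast
  then obtain k where "terminal \<delta> ((\<delta> ^^ k) (Pair qa qb))"
    using reaches_terminal_Pair by blast
  then show "\<exists>t. reach \<delta> (Pair qa qb) t \<and> terminal \<delta> t"
    unfolding reach_def by blast
next
  fix t
  assume t: "reach \<delta> (Pair qa qb) t \<and> terminal \<delta> t"
  then obtain x y where xy: "t = Pair x y" "reach \<delta>a qa x" "reach \<delta>b qb y"
    by (auto elim: reach_PairE)
  have "if st_le \<iota>a ra x \<iota>b rb y then terminal \<delta>a x else terminal \<delta>b y"
    using t xy terminal_PairD by blast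
  then have "\<not> ra x \<or> \<not> rb y"
    using assms xy unfolding finite_str_def by (auto split: if_splits)
  then show "\<not> rdy t" by (auto simp: xy ready_Pair)
qed

lemma monotonic_str_Pair:
  assumes "monotonic_str \<delta>a \<iota>a qa" and "monotonic_str \<delta>b \<iota>b qb"
  shows "monotonic_str \<delta> \<iota> (Pair qa qb)"
  unfolding monotonic_str_def
proof (intro allI impI)
  fix r
  assume "reach \<delta> (Pair qa qb) r"
  then obtain x y where xy: "r = Pair x y" "reach \<delta>a qa x" "reach \<delta>b qb y"
    by (rule reach_PairE)
  have "\<iota>a x \<le> \<iota>a (\<delta>a x)" and "\<iota>b y \<le> \<iota>b (\<delta>b y)"
    using assms xy unfolding monotonic_str_def by blast+
  then show "\<iota> r \<le> \<iota> (\<delta> r)"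
    by (auto simp: xy next_Pair index_Pair max_def)
qed

lemma reduced_str_Pair:
  assumes "reduced_str \<delta>a \<iota>a ra qa" and "reduced_str \<delta>b \<iota>b rb qb"
  shows "reduced_str \<delta> \<iota> rdy (Pair qa qb)"
  unfolding reduced_str_def
proof (intro allI impI)
  fix r s
  assume h: "reach \<delta> (Pair qa qb) r \<and> reach \<delta> r s \<and> rdy r \<and> rdy s \<and> \<iota> r = \<iota> s"
  then obtain x y where xy: "r = Pair x y" "reach \<delta>a qa x" "reach \<delta>b qb y"
    by (auto elim: reach_PairE)
  with h obtain x' y' where xy': "s = Pair x' y'" "reach \<delta>a x x'" "reach \<delta>b y y'"
    by (auto elim: reach_PairE)
  from h have "ra x" "rb y" "ra x'" "rb y'" "\<iota>a x = \<iota>b y" "\<iota>a x' = \<iota>b y'" "\<iota>a x = \<iota>a x'"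
    by (auto simp: xy xy' ready_Pair index_Pair)
  then have "x = x'" and "y = y'"
    using assms xy xy' unfolding reduced_str_def by metis+
  then show "r = s" by (simp add: xy xy')
qed

lemma simple_str_Pair:
  assumes "simple_str \<delta>a \<iota>a ra qa" and "simple_str \<delta>b \<iota>b rb qb"
  shows "simple_str \<delta> \<iota> rdy (Pair qa qb)"
  using assms finite_str_Pair monotonic_str_Pair reduced_str_Pair
  unfolding simple_str_def by blast

end

lemma inS_prod_str:
  assumes mul_closed: "\<And>u v. inS I \<alpha> u \<Longrightarrow> inS I \<alpha> v \<Longrightarrow> inS I \<alpha> (mul u v)"
    and "inS I (i # \<alpha>) a" and "inS I (i # \<alpha>) b"
  shows "inS I (i # \<alpha>) (prod_str mul a b)"
proof -
  obtain Sa qa \<iota>a \<nu>a ra \<delta>a where a: "a = Strm Sa qa \<iota>a \<nu>a ra \<delta>a"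
    using assms(2) by (cases a) auto
  obtain Sb qb \<iota>b \<nu>b rb \<delta>b where b: "b = Strm Sb qb \<iota>b \<nu>b rb \<delta>b"
    using assms(3) by (cases b) auto
  have A: "qa \<in> Sa" "\<forall>s\<in>Sa. \<delta>a s \<in> Sa \<and> \<iota>a s \<in> I i \<and> inS I \<alpha> (\<nu>a s)" "simple_str \<delta>a \<iota>a ra qa"
    using assms(2) by (simp_all add: a)
  have B: "qb \<in> Sb" "\<forall>s\<in>Sb. \<delta>b s \<in> Sb \<and> \<iota>b s \<in> I i \<and> inS I \<alpha> (\<nu>b s)" "simple_str \<delta>b \<iota>b rb qb"
    using assms(3) by (simp_all add: b)
  let ?\<delta> = "\<lambda>s. case s of Pair x y \<Rightarrow>
        (if st_le \<iota>a ra x \<iota>b rb y then Pair (\<delta>a x) y else Pair x (\<delta>b y))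
      | Atom _ \<Rightarrow> undefined"
  let ?\<iota> = "\<lambda>s. case s of Pair x y \<Rightarrow> max (\<iota>a x) (\<iota>b y) | Atom _ \<Rightarrow> undefined"
  let ?rdy = "\<lambda>s. case s of Pair x y \<Rightarrow> ra x \<and> rb y \<and> \<iota>a x = \<iota>b y | Atom _ \<Rightarrow> undefined"
  interpret merge_product \<delta>a \<iota>a ra \<delta>b \<iota>b rb ?\<delta> ?\<iota> ?rdy
    by unfold_locales simp_all
  have "simple_str ?\<delta> ?\<iota> ?rdy (Pair qa qb)"
    using A(3) B(3) by (rule simple_str_Pair)
  moreover have "max u v \<in> I i" if "u \<in> I i" and "v \<in> I i" for u v
    using that by (simp add: max_def)
  ultimately show ?thesis
    using A B mul_closed by (auto simp: a b prod_str_def)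
qed

theorem mainTheorem5:
  fixes m :: nat
    and I :: "nat \<Rightarrow> 'i::linorder set"
    and \<alpha> :: "nat list"
    and a b :: "('a, 'i, 'r::semiring_1) nv"
  assumes "m \<ge> 1"
    and "\<forall>k\<in>{1..m}. finite (I k) \<and> I k \<noteq> {}"
    and "sorted_wrt (<) \<alpha>" and "set \<alpha> \<subseteq> {1..m}"
    and "inS I \<alpha> a" and "inS I \<alpha> b"
  shows "inS I \<alpha> (mulS \<alpha> a b)"
  using assms(5,6)
proof (induction \<alpha> arbitrary: a b)
  case Nil
  then show ?case by (cases a; cases b) auto
next
  case (Cons i \<alpha>)
  then show ?case by (simp only: mulS.simps inS_prod_str)
qed

end
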